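(* For every integer $k\ge 2$, \[\overline{\alpha}(\{1,k,k+1\})=\begin{cases}\frac{2k}{6k+3} & k\equiv 0\pmod 3,\\ \frac13 & k\equiv 1\pmod 3,\\ \frac{k+1}{3k+6} & k\equiv 2\pmod 3.\end{cases}\]
   Context: For a finite set $S$ of positive integers, the distance graph $G(S)$ has vertex set $\mathbb{Z}$, with $i,j$ adjacent iff $|i-j|\in S$. The density of $A\subseteq\mathbb{Z}$ is $\delta(A)=\limsup_{N\to\infty}\frac{|A\cap[-N,N]|}{2N+1}$, and the independence ratio $\overline{\alpha}(S)$ is the supremum of $\delta(A)$ over independent sets $A$ of $G(S)$. *)

theory Defs
  imports "HOL-Analysis.Analysis"
begin

definition dist_indep :: "nat set \<Rightarrow> int set \<Rightarrow> bool" where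
  "dist_indep S A \<longleftrightarrow> (\<forall>i\<in>A. \<forall>j\<in>A. nat \<bar>i - j\<bar> \<notin> S)"

definition upper_density :: "int set \<Rightarrow> ereal" where
  "upper_density A = limsup (\<lambda>N::nat. ereal (real (card (A \<inter> {- int N .. int N})) / real (2*N+1)))"

definition indep_ratio :: "nat set \<Rightarrow> ereal" where
  "indep_ratio S = (SUP A \<in> {A. dist_indep S A}. upper_density A)"

end

theory Submission
  imports Defs "HOL-Real_Asymp.Real_Asymp"
begin

text \<open>Upper bounds come from local counting: if every translate of a finite weighted window
  meets an independent set in total weight at most \<open>c\<close>, averaging over translates bounds
  the density by \<open>c\<close> divided by the total weight. For \<open>k \<equiv> 1 (mod 3)\<close> the window
  \<open>{0, 1, k+1}\<close> is a triangle of the graph. For \<open>k \<equiv> 0\<close> and \<open>k \<equiv> 2 (mod 3)\<close> an interval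
  of length about \<open>2k\<close> is folded into two rows, whose columns form a cycle in which any
  three consecutive columns contain at most two points of the set; summing around the
  cycle gives the bound. The matching lower bounds come from explicit periodic sets built
  from residues divisible by \<open>3\<close>.\<close>

lemma card_window_le_shifted_count:
  fixes A :: "int set" and N R t :: nat
  assumes "t \<le> R"
  shows "card (A \<inter> {- int N .. int N})
    \<le> (\<Sum>x\<in>{- int N - int R .. int N}. (of_bool (x + int t \<in> A)::nat))"
proof -
  have "card (A \<inter> {- int N .. int N}) = card ((\<lambda>y. y - int t) ` (A \<inter> {- int N .. int N}))"
    by (simp add: card_image inj_on_def)
  also have "\<dots> \<le> card ({- int N - int R .. int N} \<inter> {x. x + int t \<in> A})"
    by (rule card_mono) (use assms in auto)
  also have "\<dots> = (\<Sum>x\<in>{- int N - int R .. int N}. (of_bool (x + int t \<in> A)::nat))"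
    by simp
  finally show ?thesis .
qed

lemma upper_density_le_weighted_window:
  fixes A :: "int set" and w :: "nat \<Rightarrow> nat" and R c :: nat
  assumes pos: "(\<Sum>t\<le>R. w t) > 0"
    and window: "\<And>x. (\<Sum>t\<le>R. w t * of_bool (x + int t \<in> A)) \<le> c"
  shows "upper_density A \<le> ereal (real c / real (\<Sum>t\<le>R. w t))"
proof -
  define s where "s = (\<Sum>t\<le>R. w t)"
  have count: "s * card (A \<inter> {- int N .. int N}) \<le> c * (2*N+R+1)" for N
  proof -
    let ?X = "{- int N - int R .. int N}"
    have "s * card (A \<inter> {- int N .. int N}) = (\<Sum>t\<le>R. w t * card (A \<inter> {- int N .. int N}))"
      by (simp add: s_def sum_distrib_right)
    also have "\<dots> \<le> (\<Sum>t\<le>R. w t * (\<Sum>x\<in>?X. (of_bool (x + int t \<in> A)::nat)))"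
      by (rule sum_mono) (use card_window_le_shifted_count[of _ R A N] in auto)
    also have "\<dots> = (\<Sum>x\<in>?X. \<Sum>t\<le>R. w t * of_bool (x + int t \<in> A))"
      by (subst sum.swap) (simp add: sum_distrib_left mult.commute)
    also have "\<dots> \<le> card ?X * c"
      using sum_bounded_above[of ?X "\<lambda>x. \<Sum>t\<le>R. w t * of_bool (x + int t \<in> A)" c] window
      by simp
    also have "\<dots> = c * (2*N+R+1)"
      by (simp add: nat_add_distrib nat_mult_distrib)
    finally show ?thesis .
  qed
  have s_pos: "real s > 0" using pos s_def by (simp del: of_nat_sum)
  have le: "ereal (real (card (A \<inter> {- int N .. int N})) / real (2*N+1))
       \<le> ereal (real c / real s * ((2*real N + real R + 1) / (2 * real N + 1)))" for N
  proof -
    have "real (s * card (A \<inter> {- int N .. int N})) \<le> real (c * (2*N+R+1))"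
      using count[of N] by (simp only: of_nat_le_iff)
    then have h: "real s * real (card (A \<inter> {- int N .. int N})) \<le> real c * (2*real N + real R + 1)"
      by (simp add: algebra_simps)
    have "real (card (A \<inter> {- int N .. int N})) / real (2*N+1)
        = (real s * real (card (A \<inter> {- int N .. int N}))) / (real s * (2*real N+1))"
      using s_pos by simp
    also have "\<dots> \<le> (real c * (2*real N + real R + 1)) / (real s * (2*real N+1))"
      by (rule divide_right_mono[OF h]) (use s_pos in simp)
    finally show ?thesis by simp
  qed
  have lim: "(\<lambda>N::nat. ereal (real c / real s * ((2*real N + real R + 1) / (2 * real N + 1))))
      \<longlonglongrightarrow> ereal (real c / real s * 1)"
  proof -
    have "(\<lambda>N::nat. (2*real N + real R + 1) / (2 * real N + 1)) \<longlonglongrightarrow> 1" by real_asymp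
    then show ?thesis by (intro tendsto_ereal tendsto_mult tendsto_const)
  qed
  have "upper_density A
      \<le> limsup (\<lambda>N::nat. ereal (real c / real s * ((2*real N + real R + 1) / (2 * real N + 1))))"
    unfolding upper_density_def by (rule Limsup_mono) (use le in auto)
  also have "\<dots> = ereal (real c / real s)"
    using lim_imp_Limsup[OF trivial_limit_sequentially lim] by simp
  finally show ?thesis by (simp add: s_def)
qed

lemma card_window_ge_blocks:
  fixes A :: "int set" and p c q :: nat
  assumes window: "\<And>x. card (A \<inter> {x..x + int p - 1}) \<ge> c"
  shows "card (A \<inter> {x..x + int (q*p) - 1}) \<ge> q*c"
proof (induction q)
  case 0
  then show ?case by simp
next
  case (Suc q)
  let ?L = "A \<inter> {x..x + int (q*p) - 1}" and ?B = "A \<inter> {x + int (q*p)..x + int (q*p) + int p - 1}"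
  have "0 \<le> int (q*p)"
    by simp
  then have "{x..x + int (q*p) + int p - 1} = {x..x + int (q*p) - 1} \<union> {x + int (q*p)..x + int (q*p) + int p - 1}"
    by (auto simp del: of_nat_mult)
  then have "A \<inter> {x..x + int (Suc q*p) - 1} = ?L \<union> ?B"
    by (simp add: algebra_simps Int_Un_distrib)
  then have "card (A \<inter> {x..x + int (Suc q*p) - 1}) = card ?L + card ?B"
    by (simp add: card_Un_disjoint disjoint_iff)
  then show ?case using Suc window[of "x + int (q*p)"] by simp
qed

lemma upper_density_ge_window:
  fixes A :: "int set" and p c :: nat
  assumes p: "p > 0" and window: "\<And>x. card (A \<inter> {x..x + int p - 1}) \<ge> c"
  shows "upper_density A \<ge> ereal (real c / real p)"
proof -
  have le: "ereal (real c / real p - real c / (2 * real N + 1))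
      \<le> ereal (real (card (A \<inter> {- int N .. int N})) / real (2*N+1))" for N
  proof -
    define q where "q = (2*N+1) div p"
    have qp: "q * p \<le> 2*N+1" unfolding q_def by (simp add: div_times_less_eq_dividend)
    have qp_Suc: "2*N+1 < (q+1) * p" unfolding q_def using p
      by (metis add.commute dividend_less_div_times mult.commute mult_Suc_right plus_1_eq_Suc)
    have "q*c \<le> card (A \<inter> {- int N..- int N + int (q*p) - 1})"
      by (rule card_window_ge_blocks[OF window])
    also have "\<dots> \<le> card (A \<inter> {- int N .. int N})"
      using qp by (intro card_mono) (auto simp del: of_nat_mult)
    finally have h: "real q * real c \<le> real (card (A \<inter> {- int N .. int N}))"
      by (metis of_nat_le_iff of_nat_mult)
    have "real (2*N+1) < real ((q+1) * p)" using qp_Suc by (simp only: of_nat_less_iff)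
    then have "(2 * real N + 1) / real p < real q + 1"
      using p by (simp add: divide_less_eq algebra_simps)
    then have h2: "(2 * real N + 1) / real p - 1 \<le> real q" by simp
    have "real c / real p - real c / (2 * real N + 1)
        = ((2 * real N + 1) / real p - 1) * real c / (2 * real N + 1)"
      by (simp add: field_simps)
    also have "\<dots> \<le> real q * real c / (2 * real N + 1)"
      by (intro divide_right_mono mult_right_mono h2) auto
    also have "\<dots> \<le> real (card (A \<inter> {- int N .. int N})) / (2 * real N + 1)"
      by (intro divide_right_mono h) auto
    finally show ?thesis by (simp add: add.commute)
  qed
  have "(\<lambda>N::nat. real c / real p - real c / (2 * real N + 1)) \<longlonglongrightarrow> real c / real p"
    by real_asymp
  then have lim: "(\<lambda>N::nat. ereal (real c / real p - real c / (2 * real N + 1)))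
      \<longlonglongrightarrow> ereal (real c / real p)"
    by (rule tendsto_ereal)
  have "ereal (real c / real p) = limsup (\<lambda>N::nat. ereal (real c / real p - real c / (2 * real N + 1)))"
    using lim_imp_Limsup[OF trivial_limit_sequentially lim] by simp
  also have "\<dots> \<le> upper_density A"
    unfolding upper_density_def by (rule Limsup_mono) (use le in auto)
  finally show ?thesis .
qed

lemma indep_ratio_eqI:
  assumes upper: "\<And>A. dist_indep S A \<Longrightarrow> upper_density A \<le> v"
    and indep: "dist_indep S B" and lower: "upper_density B \<ge> v"
  shows "indep_ratio S = v"
  unfolding indep_ratio_def
proof (rule antisym)
  show "(SUP A\<in>{A. dist_indep S A}. upper_density A) \<le> v"
    by (rule SUP_least) (use upper in auto)
  show "v \<le> (SUP A\<in>{A. dist_indep S A}. upper_density A)"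
    by (rule SUP_upper2[of B]) (use indep lower in auto)
qed

lemma sum_lessThan_add_nat:
  fixes f :: "nat \<Rightarrow> 'a::comm_monoid_add"
  shows "(\<Sum>t<a+b. f t) = (\<Sum>t<a. f t) + (\<Sum>i<b. f (a+i))"
  by (induction b) (simp_all add: add.assoc)

lemma sum_lessThan_rotate:
  fixes g :: "nat \<Rightarrow> 'a::comm_monoid_add"
  shows "(\<Sum>i<P. g ((i + s) mod P)) = (\<Sum>i<P. g i)"
proof (induction s)
  case 0
  show ?case by (rule sum.cong) auto
next
  case (Suc s)
  show ?case
  proof (cases P)
    case (Suc Q)
    let ?h = "\<lambda>j. g ((j + s) mod P)"
    have "Suc (Q + s) mod P = s mod P"
      using Suc by (metis add.commute add_Suc_right mod_add_self2)
    then have "(\<Sum>i<P. g ((i + Suc s) mod P)) = ?h 0 + (\<Sum>i<Q. ?h (Suc i))"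
      using Suc by (simp add: add.commute)
    also have "\<dots> = (\<Sum>i<P. ?h i)"
      unfolding Suc by (rule sum.lessThan_Suc_shift[symmetric])
    finally show ?thesis using Suc.IH by simp
  qed simp
qed

lemma cyclic_triples_sum_le:
  fixes g :: "nat \<Rightarrow> nat"
  assumes P: "P \<ge> 3"
    and inner: "\<And>j. j + 2 < P \<Longrightarrow> g j + g (j+1) + g (j+2) \<le> 2"
    and wrap1: "g (P-2) + g (P-1) + g 0 \<le> 2"
    and wrap2: "g (P-1) + g 0 + g 1 \<le> 2"
  shows "3 * (\<Sum>i<P. g i) \<le> 2 * P"
proof -
  have triple: "g ((i + 0) mod P) + g ((i + 1) mod P) + g ((i + 2) mod P) \<le> 2" for i
  proof -
    define j where "j = i mod P"
    have shift: "(i + n) mod P = (j + n) mod P" for n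
      unfolding j_def by (simp add: mod_simps)
    have "j < P" using P unfolding j_def by simp
    then consider "j + 2 < P" | "j + 2 = P" | "j + 1 = P" by linarith
    then show ?thesis
    proof cases
      case 1
      then show ?thesis using inner[OF 1] unfolding shift by simp
    next
      case 2
      then have "j = P - 2" "j + 1 = P - 1" by auto
      then show ?thesis using wrap1 2 unfolding shift by simp
    next
      case 3
      then have "j = P - 1" "(j + 2) mod P = (1 + P) mod P" by simp_all
      then have "j = P - 1" "(j + 2) mod P = 1" using P by (simp_all only: mod_add_self2) simp
      then show ?thesis using wrap2 3 unfolding shift by simp
    qed
  qed
  have "(\<Sum>i<P. g ((i + 0) mod P) + g ((i + 1) mod P) + g ((i + 2) mod P)) \<le> (\<Sum>i<P. 2)"
    by (rule sum_mono) (rule triple)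
  then show ?thesis by (simp only: sum.distrib sum_lessThan_rotate) simp
qed

lemma dist_indep_translate_notin:
  assumes "dist_indep S A" "a \<in> A" "d \<in> S"
  shows "a + int d \<notin> A"
proof
  assume "a + int d \<in> A"
  then have "nat \<bar>(a + int d) - a\<bar> \<notin> S" using assms(1,2) unfolding dist_indep_def by blast
  then show False using assms(3) by simp
qed

lemma no_step_1: "dist_indep {1,k,k+1} A \<Longrightarrow> a \<in> A \<Longrightarrow> a + 1 \<notin> A"
  using dist_indep_translate_notin[of _ A a 1] by simp

lemma no_step_k: "dist_indep {1,k,k+1} A \<Longrightarrow> a \<in> A \<Longrightarrow> a + int k \<notin> A"
  using dist_indep_translate_notin[of _ A a k] by simp

lemma no_step_Suc_k: "dist_indep {1,k,k+1} A \<Longrightarrow> a \<in> A \<Longrightarrow> a + (int k + 1) \<notin> A"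
  using dist_indep_translate_notin[of _ A a "k+1"] by (simp add: add.commute)

text \<open>For \<open>k \<equiv> 0 (mod 3)\<close> the interval \<open>[x, x + 2k]\<close> is laid out in the two rows
  \<open>[x, x + k - 1]\<close> and \<open>[x + k, x + 2k]\<close>; column \<open>i\<close> counts the points of \<open>A\<close> among
  \<open>x + i\<close> and \<open>x + k + i\<close>, and the \<open>k + 1\<close> columns are read cyclically.\<close>

definition column_k :: "nat \<Rightarrow> int set \<Rightarrow> int \<Rightarrow> nat \<Rightarrow> nat" where
  "column_k k A x i = (if i < k then of_bool (x + int i \<in> A) else 0) + of_bool (x + int k + int i \<in> A)"

lemma sum_column_k:
  "(\<Sum>i<k+1. column_k k A x i) = (\<Sum>t<2*k+1. of_bool (x + int t \<in> A))"
proof -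
  define f :: "nat \<Rightarrow> nat" where "f t = of_bool (x + int t \<in> A)" for t
  have "(\<Sum>i<k+1. (if i < k then f i else 0)) = (\<Sum>i<k. f i)"
    by simp
  moreover have "(\<Sum>i<k+1. (of_bool (x + int k + int i \<in> A)::nat)) = (\<Sum>i<k+1. f (k + i))"
    unfolding f_def by (simp add: add.assoc)
  moreover have "(\<Sum>t<2*k+1. f t) = (\<Sum>t<k. f t) + (\<Sum>i<k+1. f (k + i))"
    using sum_lessThan_add_nat[of f k "k+1"] by (simp add: mult_2)
  ultimately show ?thesis unfolding column_k_def sum.distrib f_def by simp
qed

lemma window_count_le_mod3_eq0:
  assumes ind: "dist_indep {1,k,k+1} A" and k: "k = 3*m" "m \<ge> 1"
  shows "(\<Sum>t<2*k+1. (of_bool (x + int t \<in> A)::nat)) \<le> 2*m"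
proof -
  have "3 * (\<Sum>i<k+1. column_k k A x i) \<le> 2*(k+1)"
  proof (rule cyclic_triples_sum_le)
    show "k + 1 \<ge> 3" using k by simp
  next
    fix j assume "j + 2 < k + 1"
    then show "column_k k A x j + column_k k A x (j+1) + column_k k A x (j+2) \<le> 2"
      using no_step_1[OF ind, of "x + int j"] no_step_1[OF ind, of "x + int j + 1"]
        no_step_1[OF ind, of "x + int k + int j"] no_step_1[OF ind, of "x + int k + int j + 1"]
        no_step_k[OF ind, of "x + int j"] no_step_k[OF ind, of "x + int j + 1"]
        no_step_k[OF ind, of "x + int j + 2"]
        no_step_Suc_k[OF ind, of "x + int j"] no_step_Suc_k[OF ind, of "x + int j + 1"]
      unfolding column_k_def by (auto simp: algebra_simps)
  next
    have "int (k-1) = int k - 1" using k by simp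
    then show "column_k k A x (k+1-2) + column_k k A x (k+1-1) + column_k k A x 0 \<le> 2"
      using no_step_Suc_k[OF ind, of "x + int k - 1"] no_step_1[OF ind, of "x + int k + int k - 1"]
        no_step_k[OF ind, of x] no_step_k[OF ind, of "x + int k - 1"] k
      unfolding column_k_def by (auto simp: algebra_simps)
  next
    show "column_k k A x (k+1-1) + column_k k A x 0 + column_k k A x 1 \<le> 2"
      using no_step_k[OF ind, of "x + int k"] no_step_1[OF ind, of x] no_step_Suc_k[OF ind, of x]
        no_step_k[OF ind, of x] no_step_k[OF ind, of "x+1"] k
      unfolding column_k_def by (auto simp: algebra_simps)
  qed
  then show ?thesis using sum_column_k[of k A x] k by simp
qed

text \<open>For \<open>k \<equiv> 2 (mod 3)\<close> the rows are \<open>[x, x + k + 1]\<close> and \<open>[x + k + 1, x + 2k + 2]\<close>,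
  overlapping in \<open>x + k + 1\<close>, with \<open>k + 2\<close> cyclically read columns.\<close>

definition column_Suc_k :: "nat \<Rightarrow> int set \<Rightarrow> int \<Rightarrow> nat \<Rightarrow> nat" where
  "column_Suc_k k A x i = of_bool (x + int i \<in> A) + of_bool (x + (int k + 1) + int i \<in> A)"

lemma sum_column_Suc_k:
  "(\<Sum>i<k+2. column_Suc_k k A x i)
    = (\<Sum>t<2*k+3. of_bool (x + int t \<in> A)) + of_bool (x + int k + 1 \<in> A)"
proof -
  define f :: "nat \<Rightarrow> nat" where "f t = of_bool (x + int t \<in> A)" for t
  have "(\<Sum>i<k+2. f i) = (\<Sum>i<k+1. f i) + f (k+1)"
    using sum_lessThan_add_nat[of f "k+1" 1] by (simp add: numeral_2_eq_2)
  moreover have "(\<Sum>i<k+2. (of_bool (x + (int k + 1) + int i \<in> A)::nat)) = (\<Sum>i<k+2. f (k+1+i))"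
    unfolding f_def by (intro sum.cong refl) (simp add: algebra_simps)
  moreover have "(\<Sum>t<2*k+3. f t) = (\<Sum>t<k+1. f t) + (\<Sum>i<k+2. f (k+1+i))"
  proof -
    have "2*k+3 = (k+1)+(k+2)"
      by simp
    then show ?thesis
      by (simp only: sum_lessThan_add_nat)
  qed
  moreover have "f (k+1) = of_bool (x + int k + 1 \<in> A)"
    unfolding f_def by (simp add: algebra_simps)
  moreover have "(\<Sum>i<k+2. column_Suc_k k A x i)
      = (\<Sum>i<k+2. f i) + (\<Sum>i<k+2. (of_bool (x + (int k + 1) + int i \<in> A)::nat))"
    unfolding column_Suc_k_def f_def by (rule sum.distrib)
  ultimately show ?thesis
    by (simp only: f_def ac_simps)
qed

lemma window_count_le_mod3_eq2:
  assumes ind: "dist_indep {1,k,k+1} A" and k: "k = 3*m+2"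
  shows "(\<Sum>t<2*k+3. (of_bool (x + int t \<in> A)::nat)) + of_bool (x + int k + 1 \<in> A) \<le> 2*m+2"
proof -
  have "3 * (\<Sum>i<k+2. column_Suc_k k A x i) \<le> 2*(k+2)"
  proof (rule cyclic_triples_sum_le)
    show "k + 2 \<ge> 3" using k by simp
  next
    fix j assume "j + 2 < k + 2"
    then show "column_Suc_k k A x j + column_Suc_k k A x (j+1) + column_Suc_k k A x (j+2) \<le> 2"
      using no_step_1[OF ind, of "x + int j"] no_step_1[OF ind, of "x + int j + 1"]
        no_step_1[OF ind, of "x + int k + 1 + int j"] no_step_1[OF ind, of "x + int k + 1 + int j + 1"]
        no_step_Suc_k[OF ind, of "x + int j"] no_step_Suc_k[OF ind, of "x + int j + 1"]
        no_step_Suc_k[OF ind, of "x + int j + 2"]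
        no_step_k[OF ind, of "x + int j + 1"] no_step_k[OF ind, of "x + int j + 2"]
      unfolding column_Suc_k_def by (auto simp: algebra_simps)
  next
    show "column_Suc_k k A x (k+2-2) + column_Suc_k k A x (k+2-1) + column_Suc_k k A x 0 \<le> 2"
      using no_step_1[OF ind, of "x + int k"] no_step_k[OF ind, of x]
        no_step_Suc_k[OF ind, of "x + int k + 1"] no_step_1[OF ind, of "x + 2 * int k + 1"]
        no_step_k[OF ind, of "x + int k + 1"] no_step_Suc_k[OF ind, of "x + int k"]
        no_step_Suc_k[OF ind, of x]
      unfolding column_Suc_k_def by (auto simp: algebra_simps)
  next
    show "column_Suc_k k A x (k+2-1) + column_Suc_k k A x 0 + column_Suc_k k A x 1 \<le> 2"
      using no_step_1[OF ind, of x] no_step_1[OF ind, of "x + int k + 1"]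
        no_step_k[OF ind, of "x + int k + 2"] no_step_k[OF ind, of "x + 1"]
        no_step_Suc_k[OF ind, of "x + int k + 1"] no_step_Suc_k[OF ind, of x]
        no_step_Suc_k[OF ind, of "x + 1"]
      unfolding column_Suc_k_def by (auto simp: algebra_simps)
  qed
  then show ?thesis using sum_column_Suc_k[of k A x] k by simp
qed

lemma card_periodic_window:
  fixes p :: nat and R :: "int set"
  assumes p: "p > 0" and R: "R \<subseteq> {0..<int p}"
  shows "card ({n. n mod int p \<in> R} \<inter> {x..x + int p - 1}) = card R"
proof -
  let ?S = "{n. n mod int p \<in> R} \<inter> {x..x + int p - 1}"
  have inj: "inj_on (\<lambda>n. n mod int p) ?S"
  proof (rule inj_onI)
    fix a b assume a: "a \<in> ?S" and b: "b \<in> ?S" and e: "a mod int p = b mod int p"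
    have "int p dvd a - b" using e by (simp add: mod_eq_dvd_iff)
    moreover have "\<bar>a - b\<bar> < int p" using a b by auto
    ultimately show "a = b"
      by (metis abs_of_nat dvd_imp_le_int eq_iff_diff_eq_0 linorder_not_less)
  qed
  have "R \<subseteq> (\<lambda>n. n mod int p) ` ?S"
  proof
    fix r assume r: "r \<in> R"
    define n where "n = x + (r - x) mod int p"
    have "n mod int p = (x + (r - x)) mod int p" unfolding n_def by (simp add: mod_simps)
    also have "\<dots> = r" using r R by auto
    finally have "n mod int p = r" .
    moreover have "n \<in> {x..x + int p - 1}"
      using p unfolding n_def by (simp add: pos_mod_bound add_le_imp_le_left int_one_le_iff_zero_less)
    ultimately show "r \<in> (\<lambda>n. n mod int p) ` ?S" using r by (auto intro!: image_eqI[of _ _ n])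
  qed
  then have "(\<lambda>n. n mod int p) ` ?S = R" by auto
  then show ?thesis using card_image[OF inj] by simp
qed

lemma upper_density_periodic_ge:
  fixes p :: nat and R :: "int set"
  assumes "p > 0" and "R \<subseteq> {0..<int p}"
  shows "upper_density {n. n mod int p \<in> R} \<ge> ereal (real (card R) / real p)"
  using card_periodic_window[OF assms] assms(1) by (intro upper_density_ge_window) auto

lemma dist_indep_periodicI:
  fixes p :: nat and R :: "int set"
  assumes S: "\<forall>d\<in>S. d < p" and R: "R \<subseteq> {0..<int p}"
    and no_pair: "\<And>r s d. r \<in> R \<Longrightarrow> s \<in> R \<Longrightarrow> d \<in> S \<Longrightarrow>
      s = r + int d \<or> s = r + int d - int p \<Longrightarrow> False"
  shows "dist_indep S {n. n mod int p \<in> R}"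
proof -
  have no_translate: False
    if b: "b mod int p \<in> R" and bd: "(b + int d) mod int p \<in> R" and d: "d \<in> S" for b d
  proof -
    define r where "r = b mod int p"
    have r: "0 \<le> r" "r < int p" using R b unfolding r_def by auto
    have dp: "int d < int p" using S d by simp
    have "(b + int d) mod int p = (r + int d) mod int p"
      unfolding r_def by (simp add: mod_simps)
    moreover have "(r + int d) mod int p = r + int d \<or> (r + int d) mod int p = r + int d - int p"
    proof (cases "r + int d < int p")
      case True
      then show ?thesis using r by simp
    next
      case False
      have "(r + int d) mod int p = (r + int d - int p) mod int p"
        by (simp add: mod_diff_right_eq[symmetric])
      also have "\<dots> = r + int d - int p"
        using False r dp by (intro mod_pos_pos_trivial) auto
      finally show ?thesis by simp
    qed
    ultimately show False
      using no_pair[of r "(b + int d) mod int p" d] b bd d unfolding r_def[symmetric] by auto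
  qed
  show ?thesis
    unfolding dist_indep_def
  proof (intro ballI notI)
    fix i j assume i: "i \<in> {n. n mod int p \<in> R}" and j: "j \<in> {n. n mod int p \<in> R}"
      and ij: "nat \<bar>i - j\<bar> \<in> S"
    define d where "d = nat \<bar>i - j\<bar>"
    have "d \<in> S" using ij unfolding d_def .
    show False
    proof (cases "j \<le> i")
      case True
      then have "i = j + int d" unfolding d_def by simp
      then show False using no_translate[of j d] i j \<open>d \<in> S\<close> by simp
    next
      case False
      then have "j = i + int d" unfolding d_def by simp
      then show False using no_translate[of i d] i j \<open>d \<in> S\<close> by simp
    qed
  qed
qed

lemma periodic_indep_mod3_eq0:
  fixes k m :: nat
  defines "R \<equiv> (\<lambda>i. 3*i) ` {0..<int m} \<union> (\<lambda>i. int k + 2 + 3*i) ` {0..<int m}"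
  assumes k: "k = 3*m" and m: "m \<ge> 1"
  shows "R \<subseteq> {0..<int (2*k+1)}" "card R = 2*m"
    "dist_indep {1,k,k+1} {n. n mod int (2*k+1) \<in> R}"
proof -
  show R: "R \<subseteq> {0..<int (2*k+1)}" unfolding R_def using k by auto
  have "card R = card ((\<lambda>i. 3*i) ` {0..<int m}) + card ((\<lambda>i. int k + 2 + 3*i) ` {0..<int m})"
    unfolding R_def using k by (intro card_Un_disjoint) auto
  also have "\<dots> = m + m" by (simp add: card_image inj_on_def)
  finally show "card R = 2*m" by simp
  show "dist_indep {1,k,k+1} {n. n mod int (2*k+1) \<in> R}"
  proof (rule dist_indep_periodicI[OF _ R])
    show "\<forall>d\<in>{1,k,k+1}. d < 2*k+1" using k m by auto
  next
    fix r s d assume r: "r \<in> R" and s: "s \<in> R" and d: "d \<in> {1,k,k+1}"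
      and rs: "s = r + int d \<or> s = r + int d - int (2*k+1)"
    obtain i where "0 \<le> i" "i < int m" "r = 3*i \<or> r = 3 * int m + 2 + 3*i"
      using r k unfolding R_def by auto
    moreover obtain j where "0 \<le> j" "j < int m" "s = 3*j \<or> s = 3 * int m + 2 + 3*j"
      using s k unfolding R_def by auto
    moreover have "int d = 1 \<or> int d = 3 * int m \<or> int d = 3 * int m + 1"
      using d k by auto
    ultimately show False
      using rs k by (elim disjE; simp; presburger)
  qed
qed

lemma periodic_indep_mod3_eq1:
  fixes k m :: nat
  defines "R \<equiv> (\<lambda>i. 3*i) ` {0..<int k}"
  assumes k: "k = 3*m+1"
  shows "R \<subseteq> {0..<int (3*k)}" "card R = k"
    "dist_indep {1,k,k+1} {n. n mod int (3*k) \<in> R}"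
proof -
  show R: "R \<subseteq> {0..<int (3*k)}" unfolding R_def by auto
  show "card R = k" unfolding R_def by (simp add: card_image inj_on_def)
  show "dist_indep {1,k,k+1} {n. n mod int (3*k) \<in> R}"
  proof (rule dist_indep_periodicI[OF _ R])
    show "\<forall>d\<in>{1,k,k+1}. d < 3*k" using k by auto
  next
    fix r s d assume r: "r \<in> R" and s: "s \<in> R" and d: "d \<in> {1,k,k+1}"
      and rs: "s = r + int d \<or> s = r + int d - int (3*k)"
    obtain i where "r = 3*i" using r unfolding R_def by auto
    moreover obtain j where "s = 3*j" using s unfolding R_def by auto
    moreover have "int d = 1 \<or> int d = 3 * int m + 1 \<or> int d = 3 * int m + 2"
      using d k by auto
    ultimately show False
      using rs k by (elim disjE; simp; presburger)
  qed
qed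

lemma periodic_indep_mod3_eq2:
  fixes k m :: nat
  defines "R \<equiv> (\<lambda>i. 3*i) ` {0..int m}"
  assumes k: "k = 3*m+2"
  shows "R \<subseteq> {0..<int (k+2)}" "card R = m+1"
    "dist_indep {1,k,k+1} {n. n mod int (k+2) \<in> R}"
proof -
  show R: "R \<subseteq> {0..<int (k+2)}" unfolding R_def using k by auto
  show "card R = m+1" unfolding R_def by (simp add: card_image inj_on_def)
  show "dist_indep {1,k,k+1} {n. n mod int (k+2) \<in> R}"
  proof (rule dist_indep_periodicI[OF _ R])
    show "\<forall>d\<in>{1,k,k+1}. d < k+2" by auto
  next
    fix r s d assume r: "r \<in> R" and s: "s \<in> R" and d: "d \<in> {1,k,k+1}"
      and rs: "s = r + int d \<or> s = r + int d - int (k+2)"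
    obtain i where "0 \<le> i" "i \<le> int m" "r = 3*i" using r unfolding R_def by auto
    moreover obtain j where "0 \<le> j" "j \<le> int m" "s = 3*j" using s unfolding R_def by auto
    moreover have "int d = 1 \<or> int d = 3 * int m + 2 \<or> int d = 3 * int m + 3"
      using d k by auto
    ultimately show False
      using rs k by (elim disjE; simp; presburger)
  qed
qed

lemma indep_ratio_mod3_eq0:
  assumes k: "k = 3*m" "m \<ge> 1"
  shows "indep_ratio {1,k,k+1} = ereal (real (2*m) / real (2*k+1))"
proof (rule indep_ratio_eqI)
  fix A assume ind: "dist_indep {1,k,k+1} A"
  have "upper_density A \<le> ereal (real (2*m) / real (\<Sum>t\<le>2*k. 1::nat))"
  proof (rule upper_density_le_weighted_window)
    fix x
    have "{..2*k} = {..<2*k+1}" by auto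
    then show "(\<Sum>t\<le>2*k. 1 * of_bool (x + int t \<in> A)) \<le> 2*m"
      using window_count_le_mod3_eq0[OF ind k, of x] by simp
  qed simp
  then show "upper_density A \<le> ereal (real (2*m) / real (2*k+1))" by simp
next
  define R where "R = (\<lambda>i. 3*i) ` {0..<int m} \<union> (\<lambda>i. int k + 2 + 3*i) ` {0..<int m}"
  note R = periodic_indep_mod3_eq0[OF k, folded R_def]
  show "dist_indep {1,k,k+1} {n. n mod int (2*k+1) \<in> R}" by (rule R(3))
  show "ereal (real (2*m) / real (2*k+1)) \<le> upper_density {n. n mod int (2*k+1) \<in> R}"
    using upper_density_periodic_ge[OF _ R(1)] R(2) by simp
qed

lemma indep_ratio_mod3_eq1:
  assumes k: "k = 3*m+1" "k \<ge> 2"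
  shows "indep_ratio {1,k,k+1} = ereal (1/3)"
proof (rule indep_ratio_eqI)
  fix A assume ind: "dist_indep {1,k,k+1} A"
  define w :: "nat \<Rightarrow> nat" where "w t = of_bool (t \<in> {0,1,k+1})" for t
  have weighted: "(\<Sum>t\<le>k+1. w t * f t) = f 0 + f 1 + f (k+1)" for f :: "nat \<Rightarrow> nat"
  proof -
    have "(\<Sum>t\<le>k+1. w t * f t) = (\<Sum>t\<le>k+1. if t \<in> {0,1,k+1} then f t else 0)"
      unfolding w_def by (intro sum.cong) auto
    also have "\<dots> = (\<Sum>t\<in>{..k+1} \<inter> {0,1,k+1}. f t)"
      by (rule sum.inter_restrict[symmetric]) simp
    also have "{..k+1} \<inter> {0,1,k+1} = {0,1,k+1}" by auto
    finally show ?thesis using k by simp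
  qed
  have total: "(\<Sum>t\<le>k+1. w t) = 3"
    using weighted[of "\<lambda>_. 1"] by simp
  have "upper_density A \<le> ereal (real 1 / real (\<Sum>t\<le>k+1. w t))"
  proof (rule upper_density_le_weighted_window)
    show "(\<Sum>t\<le>k+1. w t) > 0" unfolding total by simp
    fix x
    show "(\<Sum>t\<le>k+1. w t * of_bool (x + int t \<in> A)) \<le> 1"
      unfolding weighted
      using no_step_1[OF ind, of x] no_step_Suc_k[OF ind, of x] no_step_k[OF ind, of "x+1"]
      by (auto simp: algebra_simps)
  qed
  then show "upper_density A \<le> ereal (1/3)" by (simp only: total) simp
next
  define R where "R = (\<lambda>i. 3*i) ` {0..<int k}"
  note R = periodic_indep_mod3_eq1[OF k(1), folded R_def]
  show "dist_indep {1,k,k+1} {n. n mod int (3*k) \<in> R}" by (rule R(3))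
  have "real (card R) / real (3*k) = 1/3"
    using R(2) k(2) by simp
  then show "ereal (1/3) \<le> upper_density {n. n mod int (3*k) \<in> R}"
    using upper_density_periodic_ge[OF _ R(1)] k(2) by simp
qed

lemma indep_ratio_mod3_eq2:
  assumes k: "k = 3*m+2"
  shows "indep_ratio {1,k,k+1} = ereal (real (m+1) / real (k+2))"
proof (rule indep_ratio_eqI)
  fix A assume ind: "dist_indep {1,k,k+1} A"
  define w :: "nat \<Rightarrow> nat" where "w t = 1 + of_bool (t = k+1)" for t
  have weighted: "(\<Sum>t\<le>2*k+2. w t * f t) = (\<Sum>t<2*k+3. f t) + f (k+1)" for f :: "nat \<Rightarrow> nat"
  proof -
    have "{..2*k+2} = {..<2*k+3}" by auto
    moreover have "(\<Sum>t<2*k+3. of_bool (t = k+1) * f t) = (\<Sum>t<2*k+3. if t = k+1 then f t else 0)"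
      by (intro sum.cong) auto
    moreover have "(\<Sum>t<2*k+3. if t = k+1 then f t else 0) = f (k+1)"
      by simp
    ultimately show ?thesis unfolding w_def by (simp add: sum.distrib algebra_simps)
  qed
  have "upper_density A \<le> ereal (real (2*m+2) / real (\<Sum>t\<le>2*k+2. w t))"
  proof (rule upper_density_le_weighted_window)
    show "(\<Sum>t\<le>2*k+2. w t) > 0" unfolding w_def by (simp add: sum.distrib)
    fix x
    show "(\<Sum>t\<le>2*k+2. w t * of_bool (x + int t \<in> A)) \<le> 2*m+2"
      unfolding weighted using window_count_le_mod3_eq2[OF ind k, of x]
      by (simp add: algebra_simps)
  qed
  also have "\<dots> = ereal (real (m+1) / real (k+2))"
    using weighted[of "\<lambda>_. 1"] by (simp add: field_simps)
  finally show "upper_density A \<le> ereal (real (m+1) / real (k+2))" .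
next
  define R where "R = (\<lambda>i. 3*i) ` {0..int m}"
  note R = periodic_indep_mod3_eq2[OF k, folded R_def]
  show "dist_indep {1,k,k+1} {n. n mod int (k+2) \<in> R}" by (rule R(3))
  show "ereal (real (m+1) / real (k+2)) \<le> upper_density {n. n mod int (k+2) \<in> R}"
    using upper_density_periodic_ge[OF _ R(1)] R(2) by simp
qed

theorem theorem35:
  fixes k :: nat
  assumes "k \<ge> 2"
  shows "indep_ratio {1, k, k+1} =
    (if k mod 3 = 0 then ereal (2*real k / (6*real k + 3))
     else if k mod 3 = 1 then ereal (1/3)
     else ereal ((real k + 1) / (3*real k + 6)))"
proof -
  define m where "m = k div 3"
  consider "k mod 3 = 0" | "k mod 3 = 1" | "k mod 3 = 2" by linarith
  then show ?thesis
  proof cases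
    case 1
    then have k: "k = 3*m" "m \<ge> 1" using assms unfolding m_def by presburger+
    have "real (2*m) / real (2*k+1) = 2*real k / (6*real k + 3)"
      using k by (simp add: field_simps)
    then show ?thesis using indep_ratio_mod3_eq0[OF k] 1 by simp
  next
    case 2
    then have "k = 3*m+1" unfolding m_def by presburger
    then show ?thesis using indep_ratio_mod3_eq1[OF _ assms] 2 by simp
  next
    case 3
    then have k: "k = 3*m+2" unfolding m_def by presburger
    have "real (m+1) / real (k+2) = (real k + 1) / (3*real k + 6)"
      using k by (simp add: field_simps)
    then show ?thesis using indep_ratio_mod3_eq2[OF k] 3 by simp
  qed
qed

end
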